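(* Let $q=2^m$ and let $e$ be an integer with $1\le e<m$. Then every $e$-Klenian polynomial $f\in\mathbb F_q[X,Y]$ has a companion.
   Context: $q$ is a prime power and $\mathbb F_q=\{c_0,\dots,c_{q-1}\}$ is a fixed enumeration; $\mathfrak S_q$ is the symmetric group of permutations of $\mathbb F_q$, composed right to left, written in cycle notation. Every function $\mathbb F_q^2\to\mathbb F_q$ is identified with the unique polynomial in $\mathbb F_q[X,Y]$ of degree $<q$ in each variable representing it. $f\in\mathbb F_q[X,Y]$ is a local permutation polynomial (LPP) if $x\mapsto f(x,y_0)$ and $y\mapsto f(x_0,y)$ are permutations of $\mathbb F_q$ for all $x_0,y_0$. A permutation polynomial tuple is $(\beta_0,\dots,\beta_{q-1})\in\mathfrak S_q^q$ such that $\beta_i^{-1}\beta_j$ has no fixed point whenever $i\ne j$; LPPs $f$ correspond bijectively to such tuples via $f(x,\beta_i(x))=c_i$ for all $x$ and all $i$. Two LPPs $f,g$ are orthogonal (companions) if for every $(a,b)\in\mathbb F_q^2$ the system $f(X,Y)=a$, $g(X,Y)=b$ has exactly one solution in $\mathbb F_q^2$; a companion of $f$ is an LPP orthogonal to $f$. $e$-Klenian polynomials: for $q=p^r$, $0\le e<r$, $\ell=p^e$, $t=q/\ell$, let $\alpha=\prod_{i=0}^{t-1}(c_{i\ell},c_{i\ell+1},\dots,c_{(i+1)\ell-1})$, $\beta=\prod_{j=0}^{\ell-1}(c_j,c_{j+\ell},\dots,c_{j+(t-1)\ell})$ and $G=\{\alpha^i\beta^j:0\le i\le \ell-1,0\le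 j\le t-1\}$ (a subgroup of $\mathfrak S_q$ of order $q$ whose non-identity elements have no fixed points); an $e$-Klenian polynomial is an LPP whose permutation polynomial tuple consists of the $q$ elements of $G$ in some order. *)

theory Defs
  imports Main "HOL-Library.Cardinality"
begin

text \<open>Polynomials in F_q[X,Y] of degree < q in each variable are identified with
  functions F_q x F_q -> F_q (as in the paper); we represent them as curried functions.\<close>

definition is_LPP :: "('a \<Rightarrow> 'a \<Rightarrow> 'a) \<Rightarrow> bool" where
  "is_LPP f \<longleftrightarrow> (\<forall>y. bij (\<lambda>x. f x y)) \<and> (\<forall>x. bij (\<lambda>y. f x y))"

definition is_pp_tuple :: "(nat \<Rightarrow> 'a \<Rightarrow> 'a) \<Rightarrow> bool" where
  "is_pp_tuple B \<longleftrightarrow> (\<forall>i<CARD('a). bij (B i)) \<and>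
     (\<forall>i<CARD('a). \<forall>j<CARD('a). i \<noteq> j \<longrightarrow> (\<forall>x. (inv (B i) \<circ> B j) x \<noteq> x))"

definition tuple_of :: "(nat \<Rightarrow> 'a) \<Rightarrow> ('a \<Rightarrow> 'a \<Rightarrow> 'a) \<Rightarrow> (nat \<Rightarrow> 'a \<Rightarrow> 'a) \<Rightarrow> bool" where
  "tuple_of c f B \<longleftrightarrow> is_pp_tuple B \<and> (\<forall>i<CARD('a). \<forall>x. f x (B i x) = c i)"

definition orthogonal :: "('a \<Rightarrow> 'a \<Rightarrow> 'a) \<Rightarrow> ('a \<Rightarrow> 'a \<Rightarrow> 'a) \<Rightarrow> bool" where
  "orthogonal f g \<longleftrightarrow> (\<forall>a b. \<exists>!xy. f (fst xy) (snd xy) = a \<and> g (fst xy) (snd xy) = b)"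

definition companion :: "('a \<Rightarrow> 'a \<Rightarrow> 'a) \<Rightarrow> ('a \<Rightarrow> 'a \<Rightarrow> 'a) \<Rightarrow> bool" where
  "companion f g \<longleftrightarrow> is_LPP g \<and> orthogonal f g"

definition idx :: "(nat \<Rightarrow> 'a) \<Rightarrow> 'a \<Rightarrow> nat" where
  "idx c x = inv_into {..<CARD('a)} c x"

text \<open>alpha = prod_i (c_{i l}, ..., c_{(i+1)l - 1}):  c_{i l + k} -> c_{i l + (k+1 mod l)}.\<close>
definition kl_alpha :: "(nat \<Rightarrow> 'a) \<Rightarrow> nat \<Rightarrow> 'a \<Rightarrow> 'a" where
  "kl_alpha c l x = (let n = idx c x in c ((n div l) * l + (n mod l + 1) mod l))"

text \<open>beta = prod_j (c_j, c_{j+l}, ..., c_{j+(t-1)l}) with t = q/l: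
  c_{i l + j} -> c_{((i+1) mod t) l + j}.\<close>
definition kl_beta :: "(nat \<Rightarrow> 'a) \<Rightarrow> nat \<Rightarrow> 'a \<Rightarrow> 'a" where
  "kl_beta c l x = (let n = idx c x; t = CARD('a) div l in c (((n div l + 1) mod t) * l + n mod l))"

definition kl_group :: "(nat \<Rightarrow> 'a) \<Rightarrow> nat \<Rightarrow> ('a \<Rightarrow> 'a) set" where
  "kl_group c l = {(kl_alpha c l ^^ i) \<circ> (kl_beta c l ^^ j) | i j. i < l \<and> j < CARD('a) div l}"

definition e_Klenian :: "(nat \<Rightarrow> 'a) \<Rightarrow> nat \<Rightarrow> nat \<Rightarrow> ('a \<Rightarrow> 'a \<Rightarrow> 'a) \<Rightarrow> bool" where
  "e_Klenian c p e f \<longleftrightarrow> is_LPP f \<and>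
     (\<exists>B. tuple_of c f B \<and> bij_betw B {..<CARD('a)} (kl_group c (p ^ e)))"

end

theory Submission
  imports Defs
begin

text \<open>Through the enumeration c, index n = i l + k identifies F_q with Z/t \<times> Z/l
  (t = 2^(m-e), l = 2^e), and the Klenian group G becomes the group of translations.
  Hence an e-Klenian f has the form f(x, y) = \<phi>(y - x) for a bijection \<phi>.  If w is an
  orthomorphism of Z/t \<times> Z/l, i.e. both w and w - id are bijective, then g(x, y) = y - w(x)
  is an LPP orthogonal to f.  Since t and l are both even, the Sylow 2-subgroup Z/t \<times> Z/l
  is not cyclic, so an orthomorphism exists (Hall-Paige), and one is easily written down.\<close>

lemma eq_if_dvd_diff_int:
  fixes a b M :: int
  assumes "0 \<le> a" "a < M" "0 \<le> b" "b < M" "M dvd a - b"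
  shows "a = b"
proof -
  have "a mod M = b mod M"
    using assms(5) by (simp add: mod_eq_dvd_iff)
  then show ?thesis
    using assms(1-4) by simp
qed

text \<open>A pair u, v describes the map w(i, k) = (u i k mod T, v i k mod L) on Z/T \<times> Z/L,
  read on representatives 0 \<le> i < T, 0 \<le> k < L.\<close>

definition inj_mod :: "int \<Rightarrow> int \<Rightarrow> (int \<Rightarrow> int \<Rightarrow> int) \<Rightarrow> (int \<Rightarrow> int \<Rightarrow> int) \<Rightarrow> bool" where
  "inj_mod T L u v \<longleftrightarrow>
     (\<forall>i k i' k'. 0 \<le> i \<and> i < T \<and> 0 \<le> k \<and> k < L \<and> 0 \<le> i' \<and> i' < T \<and> 0 \<le> k' \<and> k' < L \<longrightarrow>
        T dvd u i k - u i' k' \<longrightarrow> L dvd v i k - v i' k' \<longrightarrow> i = i' \<and> k = k')"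

definition orthomorphism :: "int \<Rightarrow> int \<Rightarrow> (int \<Rightarrow> int \<Rightarrow> int) \<Rightarrow> (int \<Rightarrow> int \<Rightarrow> int) \<Rightarrow> bool" where
  "orthomorphism T L u v \<longleftrightarrow> inj_mod T L u v \<and> inj_mod T L (\<lambda>i k. u i k - i) (\<lambda>i k. v i k - k)"

lemma inj_modI:
  assumes "\<And>i k i' k'. \<lbrakk>0 \<le> i; i < T; 0 \<le> k; k < L; 0 \<le> i'; i' < T; 0 \<le> k'; k' < L;
      T dvd u i k - u i' k'; L dvd v i k - v i' k'\<rbrakk> \<Longrightarrow> i = i' \<and> k = k'"
  shows "inj_mod T L u v"
  using assms unfolding inj_mod_def by blast

lemma inj_mod_swap: "inj_mod T L u v \<Longrightarrow> inj_mod L T (\<lambda>k i. v i k) (\<lambda>k i. u i k)"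
  unfolding inj_mod_def by metis

lemma orthomorphism_swap:
  "orthomorphism T L u v \<Longrightarrow> orthomorphism L T (\<lambda>k i. v i k) (\<lambda>k i. u i k)"
  unfolding orthomorphism_def by (auto dest: inj_mod_swap)

lemma orthomorphism_square: "orthomorphism T T (\<lambda>i k. k) (\<lambda>i k. i + k)"
  unfolding orthomorphism_def
proof (rule conjI; rule inj_modI)
  fix i k i' k' :: int
  assume box: "0 \<le> i" "i < T" "0 \<le> k" "k < T" "0 \<le> i'" "i' < T" "0 \<le> k'" "k' < T"
    and dvd_k: "T dvd k - k'" and dvd_ik: "T dvd i + k - (i' + k')"
  from dvd_ik dvd_k have "T dvd (i + k - (i' + k')) - (k - k')"
    by (rule dvd_diff)
  then have "T dvd i - i'" by simp
  with dvd_k box show "i = i' \<and> k = k'"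
    by (simp add: eq_if_dvd_diff_int)
next
  fix i k i' k' :: int
  assume box: "0 \<le> i" "i < T" "0 \<le> k" "k < T" "0 \<le> i'" "i' < T" "0 \<le> k'" "k' < T"
    and dvd_ki: "T dvd k - i - (k' - i')" and dvd_i: "T dvd i + k - k - (i' + k' - k')"
  from dvd_ki dvd_i have "T dvd (k - i - (k' - i')) + (i + k - k - (i' + k' - k'))"
    by (rule dvd_add)
  then have "T dvd k - k'" by simp
  with dvd_i box show "i = i' \<and> k = k'"
    by (simp add: eq_if_dvd_diff_int)
qed

lemma div_eq_if_even_diff:
  fixes k k' M :: int
  assumes "0 \<le> k" "k < 2 * M" "0 \<le> k'" "k' < 2 * M" "even (k div M - k' div M)"
  shows "k div M = k' div M"
proof -
  have "M > 0" using assms(1,2) by linarith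
  have "x div M \<in> {0, 1}" if "0 \<le> x" "x < 2 * M" for x
  proof -
    have "x div M * M < 2 * M"
      using div_mult_mod_eq[of x M] pos_mod_sign[of M x] \<open>M > 0\<close> that(2) by linarith
    then have "x div M < 2" using \<open>M > 0\<close> by simp
    moreover have "0 \<le> x div M" using that(1) \<open>M > 0\<close> by (simp add: pos_imp_zdiv_nonneg_iff)
    ultimately show ?thesis by auto
  qed
  then have "k div M \<in> {0, 1}" "k' div M \<in> {0, 1}"
    using assms(1-4) by blast+
  then show ?thesis using assms(5) by auto
qed

lemma eq_if_div_eq_mod_dvd:
  fixes k k' M :: int
  assumes "M > 0" "k div M = k' div M" "M dvd k mod M - k' mod M"
  shows "k = k'"
proof -
  have "k mod M = k' mod M"
    using assms by (intro eq_if_dvd_diff_int) simp_all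
  then show ?thesis using assms(2) by (metis div_mult_mod_eq)
qed

text \<open>Write k = M h + r with h \<in> {0, 1} and 0 \<le> r < M.  As s is even, h is the parity of the
  second coordinate of w and of the first coordinate of w - id; knowing h, the remaining
  congruences force equality of i and r.\<close>

lemma orthomorphism_scaled:
  fixes N M s :: int
  assumes M: "M = N * s" and s: "even s"
  shows "orthomorphism (2 * N) (2 * M) (\<lambda>i k. k div M - i) (\<lambda>i k. 2 * (k mod M) + k div M + s * i)"
  unfolding orthomorphism_def
proof (rule conjI; rule inj_modI)
  fix i k i' k' :: int
  assume box: "0 \<le> i" "i < 2 * N" "0 \<le> k" "k < 2 * M" "0 \<le> i'" "i' < 2 * N" "0 \<le> k'" "k' < 2 * M"
    and dvd_u: "2 * N dvd k div M - i - (k' div M - i')"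
    and dvd_v: "2 * M dvd 2 * (k mod M) + k div M + s * i - (2 * (k' mod M) + k' div M + s * i')"
  have "M > 0" using box by linarith
  have "2 * (k mod M) + k div M + s * i - (2 * (k' mod M) + k' div M + s * i')
      = 2 * (k mod M - k' mod M) + (k div M - k' div M) + s * (i - i')"
    by (simp add: algebra_simps)
  with dvd_v have "even (2 * (k mod M - k' mod M) + (k div M - k' div M) + s * (i - i'))"
    by (metis dvd_trans dvd_triv_left)
  then have h: "k div M = k' div M"
    using box s by (intro div_eq_if_even_diff) auto
  with dvd_u have "2 * N dvd i' - i" by simp
  then have i: "i = i'"
    using box eq_if_dvd_diff_int by metis
  have "2 * M dvd 2 * (k mod M - k' mod M)"
    using dvd_v h i by (simp add: algebra_simps)
  then have "M dvd k mod M - k' mod M"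
    by (subst (asm) dvd_times_left_cancel_iff) simp_all
  then show "i = i' \<and> k = k'"
    using i h \<open>M > 0\<close> eq_if_div_eq_mod_dvd by blast
next
  fix i k i' k' :: int
  assume box: "0 \<le> i" "i < 2 * N" "0 \<le> k" "k < 2 * M" "0 \<le> i'" "i' < 2 * N" "0 \<le> k'" "k' < 2 * M"
    and dvd_u: "2 * N dvd k div M - i - i - (k' div M - i' - i')"
    and dvd_v: "2 * M dvd 2 * (k mod M) + k div M + s * i - k - (2 * (k' mod M) + k' div M + s * i' - k')"
  have "M > 0" using box by linarith
  have "k div M - i - i - (k' div M - i' - i') = k div M - k' div M - 2 * (i - i')"
    by (simp add: algebra_simps)
  with dvd_u have "even (k div M - k' div M - 2 * (i - i'))"
    by (metis dvd_trans dvd_triv_left)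
  then have h: "k div M = k' div M"
    using box by (intro div_eq_if_even_diff) auto
  then have "k div M - i - i - (k' div M - i' - i') = 2 * (i' - i)" by simp
  with dvd_u have "2 * N dvd 2 * (i' - i)" by simp
  then have "N dvd i - i'"
    by (subst (asm) dvd_times_left_cancel_iff) (simp_all add: dvd_diff_commute)
  then obtain j where j: "i - i' = N * j" ..
  have "k - k' = k mod M - k' mod M"
    using div_mult_mod_eq[of k M] div_mult_mod_eq[of k' M] unfolding h by linarith
  moreover have "s * i - s * i' = M * j"
    using j M by (simp add: right_diff_distrib[symmetric] mult.left_commute)
  ultimately have "2 * (k mod M) + k div M + s * i - k - (2 * (k' mod M) + k' div M + s * i' - k')
      = (k mod M - k' mod M) + M * j"
    using h by linarith
  with dvd_v have dvd_r: "2 * M dvd (k mod M - k' mod M) + M * j" by simp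
  then have "M dvd (k mod M - k' mod M) + M * j"
    by (rule dvd_trans[rotated]) simp
  then have "M dvd k mod M - k' mod M"
    using dvd_add_times_triv_right_iff[of M _ j] by (simp add: mult.commute)
  then have k: "k = k'"
    using h \<open>M > 0\<close> eq_if_div_eq_mod_dvd by blast
  then have "M * 2 dvd M * j" using dvd_r by (simp add: mult.commute)
  then have "even j" using \<open>M > 0\<close> by simp
  then have "2 * N dvd i - i'" using j by (auto simp: mult.assoc)
  then have "i = i'"
    using box by (intro eq_if_dvd_diff_int)
  with k show "i = i' \<and> k = k'" by blast
qed

lemma orthomorphism_pow2_exists:
  assumes "1 \<le> a" "1 \<le> b"
  shows "\<exists>u v. orthomorphism ((2::int) ^ a) (2 ^ b) u v"
proof -
  have lt: "\<exists>u v. orthomorphism ((2::int) ^ a) (2 ^ b) u v" if "1 \<le> a" "a < b" for a b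
  proof -
    have "(2::int) ^ (b - 1) = 2 ^ (a - 1) * 2 ^ (b - a)"
      using that by (simp flip: power_add)
    moreover have "even ((2::int) ^ (b - a))"
      using that by simp
    ultimately have "\<exists>u v. orthomorphism (2 * 2 ^ (a - 1)) (2 * (2::int) ^ (b - 1)) u v"
      by (blast intro: orthomorphism_scaled)
    moreover have "2 * (2::int) ^ (a - 1) = 2 ^ a" "2 * (2::int) ^ (b - 1) = 2 ^ b"
      using that by (simp_all flip: power_Suc)
    ultimately show ?thesis by simp
  qed
  consider "a = b" | "a < b" | "b < a" by linarith
  then show ?thesis
  proof cases
    case 1
    then show ?thesis using orthomorphism_square by blast
  next
    case 2
    then show ?thesis using lt assms by blast
  next
    case 3
    then show ?thesis using lt assms orthomorphism_swap by blast
  qed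
qed

lemma is_LPP_if_inj:
  fixes f :: "'a::finite \<Rightarrow> 'a \<Rightarrow> 'a"
  assumes "\<And>y. inj (\<lambda>x. f x y)" "\<And>x. inj (f x)"
  shows "is_LPP f"
  using assms by (simp add: is_LPP_def bij_def finite_UNIV_inj_surj)

lemma orthogonal_if_inj:
  fixes f g :: "'a::finite \<Rightarrow> 'a \<Rightarrow> 'a"
  assumes "inj (\<lambda>(x, y). (f x y, g x y))"
  shows "orthogonal f g"
proof -
  let ?h = "\<lambda>p. (f (fst p) (snd p), g (fst p) (snd p))"
  have "inj ?h"
    using assms by (simp add: case_prod_beta')
  then have "bij ?h"
    by (simp add: bij_def finite_UNIV_inj_surj)
  then have "\<exists>!p. ?h p = (a, b)" for a b
    by (rule bij_iff[THEN iffD1, rule_format])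
  then show ?thesis
    unfolding orthogonal_def by simp
qed

context
  fixes c :: "nat \<Rightarrow> 'a::finite" and l t :: nat
  assumes c_bij: "bij_betw c {..<CARD('a)} UNIV"
    and card_eq: "l * t = CARD('a)"
begin

definition row :: "'a \<Rightarrow> int" where
  "row x = int (idx c x div l)"

definition col :: "'a \<Rightarrow> int" where
  "col x = int (idx c x mod l)"

definition point :: "int \<Rightarrow> int \<Rightarrow> 'a" where
  "point a b = c (nat a * l + nat b)"

lemma l_pos: "0 < l" and t_pos: "0 < t"
  using card_eq by (metis finite_UNIV_card_ge_0 finite_class.finite_UNIV nat_0_less_mult_iff)+

lemma card_div_l: "CARD('a) div l = t"
  using card_eq l_pos by (metis nonzero_mult_div_cancel_left neq0_conv)

lemma idx_less_card: "idx c x < CARD('a)"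
  using c_bij unfolding bij_betw_def idx_def by (metis UNIV_I inv_into_into lessThan_iff)

lemma c_idx: "c (idx c x) = x"
  unfolding idx_def using c_bij by (simp add: bij_betw_inv_into_right)

lemma idx_c: "n < CARD('a) \<Longrightarrow> idx c (c n) = n"
  unfolding idx_def using c_bij by (simp add: bij_betw_inv_into_left)

lemma row_nonneg: "0 \<le> row x" and row_less: "row x < int t"
  using idx_less_card[of x] card_eq l_pos
  by (simp_all add: row_def div_less_iff_less_mult mult.commute)

lemma col_nonneg: "0 \<le> col x" and col_less: "col x < int l"
  using l_pos by (simp_all add: col_def)

lemma point_row_col: "point (row x) (col x) = x"
  by (simp add: point_def row_def col_def c_idx)

lemma
  assumes "0 \<le> a" "a < int t" "0 \<le> b" "b < int l"
  shows row_point: "row (point a b) = a" and col_point: "col (point a b) = b"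
proof -
  have "nat a * l + nat b < (nat a + 1) * l"
    using assms by simp
  also have "\<dots> \<le> CARD('a)"
    using assms card_eq by (metis Suc_eq_plus1 Suc_leI mult.commute mult_le_mono2 nat_less_iff)
  finally have "idx c (point a b) = nat a * l + nat b"
    unfolding point_def by (rule idx_c)
  then show "row (point a b) = a" "col (point a b) = b"
    using assms by (simp_all add: row_def col_def)
qed

lemma eq_if_coords_dvd:
  assumes "int t dvd row x - row y" "int l dvd col x - col y"
  shows "x = y"
proof -
  have "row x = row y" "col x = col y"
    using assms row_nonneg row_less col_nonneg col_less by (blast intro: eq_if_dvd_diff_int)+
  then show ?thesis by (metis point_row_col)
qed

lemma point_mod_eqD:
  assumes "point (a mod int t) (b mod int l) = point (a' mod int t) (b' mod int l)"
  shows "int t dvd a - a'" "int l dvd b - b'"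
proof -
  have bounds: "0 \<le> z mod int t" "z mod int t < int t" "0 \<le> z mod int l" "z mod int l < int l" for z
    using t_pos l_pos by simp_all
  have "row (point (a mod int t) (b mod int l)) = row (point (a' mod int t) (b' mod int l))"
    "col (point (a mod int t) (b mod int l)) = col (point (a' mod int t) (b' mod int l))"
    using assms by simp_all
  then have "a mod int t = a' mod int t" "b mod int l = b' mod int l"
    by (simp_all only: row_point[OF bounds] col_point[OF bounds])
  then show "int t dvd a - a'" "int l dvd b - b'"
    by (simp_all add: mod_eq_dvd_iff)
qed

lemma kl_alpha_pow: "(kl_alpha c l ^^ n) x = point (row x) ((col x + int n) mod int l)"
proof (induction n)
  case 0
  then show ?case
    using col_nonneg col_less by (simp add: point_row_col)
next
  case (Suc n)
  have alpha: "kl_alpha c l y = point (row y) ((col y + 1) mod int l)" for y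
    unfolding kl_alpha_def point_def row_def col_def Let_def
    by (simp add: nat_mod_distrib nat_add_distrib)
  have "(kl_alpha c l ^^ Suc n) x = kl_alpha c l (point (row x) ((col x + int n) mod int l))"
    using Suc by simp
  also have "\<dots> = point (row x) ((col x + int (Suc n)) mod int l)"
    using row_nonneg row_less l_pos
    by (simp add: alpha row_point col_point mod_add_left_eq mod_add_right_eq ac_simps)
  finally show ?case .
qed

lemma kl_beta_pow: "(kl_beta c l ^^ n) x = point ((row x + int n) mod int t) (col x)"
proof (induction n)
  case 0
  then show ?case
    using row_nonneg row_less by (simp add: point_row_col)
next
  case (Suc n)
  have beta: "kl_beta c l y = point ((row y + 1) mod int t) (col y)" for y
    unfolding kl_beta_def point_def row_def col_def Let_def card_div_l
    by (simp add: nat_mod_distrib nat_add_distrib)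
  have "(kl_beta c l ^^ Suc n) x = kl_beta c l (point ((row x + int n) mod int t) (col x))"
    using Suc by simp
  also have "\<dots> = point ((row x + int (Suc n)) mod int t) (col x)"
    using col_nonneg col_less t_pos
    by (simp add: beta row_point col_point mod_add_left_eq mod_add_right_eq ac_simps)
  finally show ?case .
qed

lemma kl_translation:
  "((kl_alpha c l ^^ i) \<circ> (kl_beta c l ^^ j)) x = point ((row x + int j) mod int t) ((col x + int i) mod int l)"
proof -
  let ?y = "point ((row x + int j) mod int t) (col x)"
  have "row ?y = (row x + int j) mod int t" "col ?y = col x"
    using t_pos col_nonneg[of x] col_less[of x] by (simp_all add: row_point col_point)
  then show ?thesis
    by (simp add: kl_alpha_pow kl_beta_pow)
qed

lemma kl_translation_origin:
  "((kl_alpha c l ^^ nat (b mod int l)) \<circ> (kl_beta c l ^^ nat (a mod int t))) (point 0 0)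
    = point (a mod int t) (b mod int l)"
  unfolding kl_translation using t_pos l_pos by (simp add: row_point col_point)

lemma kl_translation_to:
  "((kl_alpha c l ^^ nat ((col y - col x) mod int l)) \<circ> (kl_beta c l ^^ nat ((row y - row x) mod int t))) x = y"
proof -
  have "(row x + (row y - row x) mod int t) mod int t = row y"
    using row_nonneg[of y] row_less[of y] by (simp add: mod_add_right_eq)
  moreover have "(col x + (col y - col x) mod int l) mod int l = col y"
    using col_nonneg[of y] col_less[of y] by (simp add: mod_add_right_eq)
  ultimately show ?thesis
    unfolding kl_translation using t_pos l_pos by (simp add: point_row_col)
qed

lemma kl_displacement:
  assumes tuple: "tuple_of c f B" and B: "bij_betw B {..<CARD('a)} (kl_group c l)"
    and eq: "f x y = f x' y'"
  shows "int t dvd (row y - row x) - (row y' - row x')"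
    and "int l dvd (col y - col x) - (col y' - col x')"
proof -
  define shift where "shift x y = (kl_alpha c l ^^ nat ((col y - col x) mod int l))
      \<circ> (kl_beta c l ^^ nat ((row y - row x) mod int t))" for x y
  have shift_value: "\<exists>i<CARD('a). B i = shift x y \<and> f x y = c i" for x y
  proof -
    have "nat ((col y - col x) mod int l) < l" "nat ((row y - row x) mod int t) < t"
      using l_pos t_pos by (simp_all add: nat_less_iff)
    then have "shift x y \<in> kl_group c l"
      unfolding kl_group_def shift_def card_div_l by blast
    then obtain i where i: "i < CARD('a)" "B i = shift x y"
      using B unfolding bij_betw_def by (metis imageE lessThan_iff)
    with tuple have "f x (shift x y x) = c i"
      unfolding tuple_of_def by auto
    with i show ?thesis
      unfolding shift_def kl_translation_to by blast
  qed
  obtain i where i: "i < CARD('a)" "B i = shift x y" "f x y = c i"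
    using shift_value by blast
  obtain i' where i': "i' < CARD('a)" "B i' = shift x' y'" "f x' y' = c i'"
    using shift_value by blast
  have "i = i'"
    using i i' eq idx_c by metis
  then have "shift x y (point 0 0) = shift x' y' (point 0 0)"
    using i i' by simp
  then have "point ((row y - row x) mod int t) ((col y - col x) mod int l)
      = point ((row y' - row x') mod int t) ((col y' - col x') mod int l)"
    unfolding shift_def kl_translation_origin .
  then show "int t dvd (row y - row x) - (row y' - row x')"
    and "int l dvd (col y - col x) - (col y' - col x')"
    by (rule point_mod_eqD)+
qed

definition kl_companion :: "(int \<Rightarrow> int \<Rightarrow> int) \<Rightarrow> (int \<Rightarrow> int \<Rightarrow> int) \<Rightarrow> 'a \<Rightarrow> 'a \<Rightarrow> 'a" where
  "kl_companion u v x y =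
     point ((row y - u (row x) (col x)) mod int t) ((col y - v (row x) (col x)) mod int l)"

lemma kl_companion_eqD:
  assumes "kl_companion u v x y = kl_companion u v x' y'"
  shows "int t dvd (row y - u (row x) (col x)) - (row y' - u (row x') (col x'))"
    and "int l dvd (col y - v (row x) (col x)) - (col y' - v (row x') (col x'))"
  using assms unfolding kl_companion_def by (rule point_mod_eqD)+

lemma eq_if_inj_mod:
  assumes "inj_mod (int t) (int l) u v"
    and "int t dvd u (row x) (col x) - u (row x') (col x')"
    and "int l dvd v (row x) (col x) - v (row x') (col x')"
  shows "x = x'"
proof -
  have "row x = row x' \<and> col x = col x'"
    using assms row_nonneg row_less col_nonneg col_less unfolding inj_mod_def by blast
  then show ?thesis by (metis point_row_col)
qed

lemma is_LPP_kl_companion: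
  assumes "inj_mod (int t) (int l) u v"
  shows "is_LPP (kl_companion u v)"
proof (rule is_LPP_if_inj; rule injI)
  fix y x x'
  assume "kl_companion u v x y = kl_companion u v x' y"
  from kl_companion_eqD[OF this] show "x = x'"
    by (intro eq_if_inj_mod[OF assms]) (simp_all add: dvd_diff_commute)
next
  fix x y y'
  assume "kl_companion u v x y = kl_companion u v x y'"
  from kl_companion_eqD[OF this] show "y = y'"
    by (intro eq_if_coords_dvd) simp_all
qed

lemma orthogonal_kl_companion:
  assumes orth: "orthomorphism (int t) (int l) u v"
    and tuple: "tuple_of c f B" and B: "bij_betw B {..<CARD('a)} (kl_group c l)"
  shows "orthogonal f (kl_companion u v)"
proof (rule orthogonal_if_inj, rule injI, clarify)
  fix x y x' y'
  assume f_eq: "f x y = f x' y'" and g_eq: "kl_companion u v x y = kl_companion u v x' y'"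
  note f_dvd = kl_displacement[OF tuple B f_eq] and g_dvd = kl_companion_eqD[OF g_eq]
  have "int t dvd (u (row x) (col x) - row x) - (u (row x') (col x') - row x')"
    using dvd_diff[OF f_dvd(1) g_dvd(1)] by (simp add: algebra_simps)
  moreover have "int l dvd (v (row x) (col x) - col x) - (v (row x') (col x') - col x')"
    using dvd_diff[OF f_dvd(2) g_dvd(2)] by (simp add: algebra_simps)
  ultimately have x: "x = x'"
    using orth unfolding orthomorphism_def by (intro eq_if_inj_mod) auto
  then have "y = y'"
    using f_dvd by (intro eq_if_coords_dvd) simp_all
  with x show "x = x' \<and> y = y'" ..
qed

end

theorem theorem4p6:
  fixes f :: "'a::{finite,field} \<Rightarrow> 'a \<Rightarrow> 'a" and c :: "nat \<Rightarrow> 'a" and m e :: nat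
  assumes "CARD('a) = 2 ^ m"
    and "bij_betw c {..<CARD('a)} (UNIV :: 'a set)"
    and "1 \<le> e" and "e < m"
    and "e_Klenian c 2 e f"
  shows "\<exists>g. companion f g"
proof -
  obtain B where B: "tuple_of c f B" "bij_betw B {..<CARD('a)} (kl_group c (2 ^ e))"
    using assms(5) unfolding e_Klenian_def by blast
  have card: "2 ^ e * 2 ^ (m - e) = CARD('a)"
    using assms(1,4) by (simp flip: power_add)
  obtain u v where orth: "orthomorphism (int (2 ^ (m - e))) (int (2 ^ e)) u v"
    using orthomorphism_pow2_exists[of "m - e" e] assms(3,4) by (auto simp: Suc_le_eq)
  then have "inj_mod (int (2 ^ (m - e))) (int (2 ^ e)) u v"
    unfolding orthomorphism_def ..
  then have "companion f (kl_companion c (2 ^ e) (2 ^ (m - e)) u v)"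
    unfolding companion_def
    using is_LPP_kl_companion[OF assms(2) card] orthogonal_kl_companion[OF assms(2) card orth B]
    by blast
  then show ?thesis by blast
qed

end
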